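(* Let $Z\in\mathcal{H}_3$ be the period matrix of a simple genus $3$ hyperelliptic Jacobian such that $\vartheta[\delta](Z)=0$ for exactly one even characteristic class $\delta\in\frac12\mathbb{Z}^6/\mathbb{Z}^6$, and $\delta\neq 0$. Then there is $\gamma\in\Gamma_{1,2}$ such that $Z$ satisfies the Vanishing Criterion for the map $\eta=\gamma\tilde\eta$, i.e. for every $S\subseteq B$ with $\#S$ even, $\vartheta[\eta_S](Z)=0$ if and only if $\#(S\circ U_\eta)\neq 4$. Furthermore, this $\gamma$ can be taken to be any $\gamma\in\Gamma_{1,2}$ such that $\gamma\,(\tfrac12,\tfrac12,\tfrac12,\tfrac12,0,\tfrac12)^T\equiv\delta \pmod{\mathbb{Z}^6}$.
   Context: $\mathcal{H}_g$ is the set of complex symmetric $g\times g$ matrices with positive definite imaginary part. For $x\in\mathbb{C}^{6}$ write $x=(x_1,x_2)$ with $x_1$ the first $3$ and $x_2$ the last $3$ entries. Let $B=\{1,2,\dots,7,\infty\}$, $S_1\circ S_2=(S_1\cup S_2)\setminus(S_1\cap S_2)$, $S^c=B\setminus S$. For $\xi,\zeta\in\frac12\mathbb{Z}^{6}$: $e_*(\xi)=\exp(4\pi i\,\xi_1^T\xi_2)$ and $e_2(\xi,\zeta)=\exp(4\pi i\,\xi^TJ\zeta)$ with $J=\begin{pmatrix}0&\mathbb{1}_3\\-\mathbb{1}_3&0\end{pmatrix}$. $\Xi_3$ is the set of maps $\eta$ from subsets of $B$ to $\frac12\mathbb{Z}^6$ such that: (i) $\eta(\{\infty\})=0$; (ii)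 $\eta(S)=\sum_{i\in S}\eta(\{i\})$; (iii) $\eta(S)\equiv\eta(S^c)$ mod $\mathbb{Z}^6$ and the induced map from the group of even-cardinality subsets of $B$ modulo $S\sim S^c$ (under $\circ$) to $\frac12\mathbb{Z}^6/\mathbb{Z}^6$ is a group isomorphism; (iv) for $\#S_1,\#S_2$ even, $e_2(\eta(S_1),\eta(S_2))=(-1)^{\#(S_1\cap S_2)}$; (v) there is $U_\eta\subseteq B$ with $\#U_\eta\equiv 4\pmod 4$ such that for all $S$ of even cardinality $e_*(\eta(S))=(-1)^{(4-\#(S\circ U_\eta))/2}$ (one has $U_\eta=\{i\neq\infty: e_*(\eta(\{i\}))=-1\}\cup\{\infty\}$). Write $\eta_S=\eta(S)$, $\eta_i=\eta(\{i\})$. Theta constants: for $\xi\in\frac12\mathbb{Z}^6$, $\vartheta[\xi](Z)=\exp(\pi i\xi_1^TZ\xi_1+2\pi i\xi_1^T\xi_2)\sum_{n\in\mathbb{Z}^3}\exp(\pi i n^TZn+2\pi i n^T(\xi_2+Z\xi_1))$; $\xi$ is even if $e_*(\xi)=1$; vanishing of $\vartheta[\xi](Z)$ depends only on $\xi$ mod $\mathbb{Z}^6$. $\mathrm{Sp}_6(\mathbb{Z})$ is the group of integer $6\times6$ matrices preserving the form $x_1^Ty_2-x_2^Ty_1$; it acts on maps $\eta$ by $(\gamma\eta)(S)=\gamma\,\eta(S)$ (matrix times column vector), considered modulo $\mathbb{Z}^6$. With $Q(x)=x_1^Tx_2$, $\Gamma_{1,2}=\{\gamma\in\mathrm{Sp}_6(\mathbb{Z}):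 Q(\gamma x)\equiv Q(x)\pmod 2\}$. Mumford's map $\tilde\eta\in\Xi_3$ is determined (mod $\mathbb{Z}^6$) by $\tilde\eta_1=(\tfrac12,0,0,0,0,0)$, $\tilde\eta_2=(\tfrac12,0,0,\tfrac12,0,0)$, $\tilde\eta_3=(0,\tfrac12,0,\tfrac12,0,0)$, $\tilde\eta_4=(0,\tfrac12,0,\tfrac12,\tfrac12,0)$, $\tilde\eta_5=(0,0,\tfrac12,\tfrac12,\tfrac12,0)$, $\tilde\eta_6=(0,0,\tfrac12,\tfrac12,\tfrac12,\tfrac12)$, $\tilde\eta_7=(0,0,0,\tfrac12,\tfrac12,\tfrac12)$; it has $U_{\tilde\eta}=\{2,4,6,\infty\}$ and $\tilde\eta_{U_{\tilde\eta}}\equiv(\tfrac12,\tfrac12,\tfrac12,\tfrac12,0,\tfrac12)$. *)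

theory Defs
  imports "HOL-Analysis.Analysis"
begin

section \<open>Characteristics in (1/2)Z^6, written as pairs (x1, x2) of vectors in R^3\<close>

type_synonym vec6 = "(real^3) \<times> (real^3)"

definition half_int_vec :: "vec6 \<Rightarrow> bool" where
  "half_int_vec x \<longleftrightarrow> (\<forall>i. 2 * (fst x $ i) \<in> \<int>) \<and> (\<forall>i. 2 * (snd x $ i) \<in> \<int>)"

definition int_vec :: "vec6 \<Rightarrow> bool" where
  "int_vec x \<longleftrightarrow> (\<forall>i. fst x $ i \<in> \<int>) \<and> (\<forall>i. snd x $ i \<in> \<int>)"

definition cong6 :: "vec6 \<Rightarrow> vec6 \<Rightarrow> bool" where
  "cong6 x y \<longleftrightarrow> int_vec (fst x - fst y, snd x - snd y)"

definition symp :: "vec6 \<Rightarrow> vec6 \<Rightarrow> real" where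
  "symp x y = fst x \<bullet> snd y - snd x \<bullet> fst y"

definition estar :: "vec6 \<Rightarrow> complex" where
  "estar x = exp (4 * pi * \<i> * complex_of_real (fst x \<bullet> snd x))"

definition e2 :: "vec6 \<Rightarrow> vec6 \<Rightarrow> complex" where
  "e2 x y = exp (4 * pi * \<i> * complex_of_real (symp x y))"

definition even_char :: "vec6 \<Rightarrow> bool" where
  "even_char x \<longleftrightarrow> estar x = 1"

definition cdot :: "complex^3 \<Rightarrow> complex^3 \<Rightarrow> complex" where
  "cdot v w = (\<Sum>i\<in>UNIV. v $ i * w $ i)"

definition cvec_of_real :: "real^3 \<Rightarrow> complex^3" where
  "cvec_of_real v = (\<chi> i. complex_of_real (v $ i))"

definition cvec_of_int :: "int^3 \<Rightarrow> complex^3" where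
  "cvec_of_int n = (\<chi> i. of_int (n $ i))"

definition im_mat :: "complex^3^3 \<Rightarrow> real^3^3" where
  "im_mat Z = (\<chi> i j. Im (Z $ i $ j))"

definition siegel3 :: "complex^3^3 \<Rightarrow> bool" where
  "siegel3 Z \<longleftrightarrow> transpose Z = Z \<and> (\<forall>v::real^3. v \<noteq> 0 \<longrightarrow> v \<bullet> (im_mat Z *v v) > 0)"

definition theta :: "vec6 \<Rightarrow> complex^3^3 \<Rightarrow> complex" where
  "theta xi Z =
     (let x1 = cvec_of_real (fst xi); x2 = cvec_of_real (snd xi) in
      exp (pi * \<i> * cdot x1 (Z *v x1) + 2 * pi * \<i> * cdot x1 x2) *
      infsum (\<lambda>n::int^3. exp (pi * \<i> * cdot (cvec_of_int n) (Z *v cvec_of_int n)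
                 + 2 * pi * \<i> * cdot (cvec_of_int n) (x2 + Z *v x1))) UNIV)"

section \<open>Sp_6(Z) and Gamma_{1,2}; an integer 6x6 matrix is given by its 3x3 blocks (A,B;C,D)\<close>

type_synonym mat6 = "(int^3^3) \<times> (int^3^3) \<times> (int^3^3) \<times> (int^3^3)"

definition rmat :: "int^3^3 \<Rightarrow> real^3^3" where
  "rmat A = (\<chi> i j. real_of_int (A $ i $ j))"

definition apply6 :: "mat6 \<Rightarrow> vec6 \<Rightarrow> vec6" where
  "apply6 g x = (case g of (A, B, C, D) \<Rightarrow>
      (rmat A *v fst x + rmat B *v snd x, rmat C *v fst x + rmat D *v snd x))"

definition Sp6 :: "mat6 set" where
  "Sp6 = {g. \<forall>x y. symp (apply6 g x) (apply6 g y) = symp x y}"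

definition Gamma12 :: "mat6 set" where
  "Gamma12 = {g \<in> Sp6. \<forall>x. int_vec x \<longrightarrow>
      (fst (apply6 g x) \<bullet> snd (apply6 g x) - fst x \<bullet> snd x) / 2 \<in> \<int>}"

datatype bpt = Pt nat | Infty

definition Bset :: "bpt set" where
  "Bset = insert Infty (Pt ` {1..7})"

definition symdiff :: "'a set \<Rightarrow> 'a set \<Rightarrow> 'a set" where
  "symdiff S T = (S \<union> T) - (S \<inter> T)"

definition U_eta :: "(bpt set \<Rightarrow> vec6) \<Rightarrow> bpt set" where
  "U_eta eta = insert Infty {Pt i | i. i \<in> {1..7} \<and> estar (eta {Pt i}) = -1}"

definition act :: "mat6 \<Rightarrow> (bpt set \<Rightarrow> vec6) \<Rightarrow> (bpt set \<Rightarrow> vec6)" where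
  "act g eta = (\<lambda>S. apply6 g (eta S))"

definition v3 :: "real \<Rightarrow> real \<Rightarrow> real \<Rightarrow> real^3" where
  "v3 a b c = vector [a, b, c]"

text \<open>Mumford's map on single points\<close>
fun eta_tilde_pt :: "bpt \<Rightarrow> vec6" where
  "eta_tilde_pt (Pt k) =
     (if k = 1 then (v3 (1/2) 0 0, v3 0 0 0)
      else if k = 2 then (v3 (1/2) 0 0, v3 (1/2) 0 0)
      else if k = 3 then (v3 0 (1/2) 0, v3 (1/2) 0 0)
      else if k = 4 then (v3 0 (1/2) 0, v3 (1/2) (1/2) 0)
      else if k = 5 then (v3 0 0 (1/2), v3 (1/2) (1/2) 0)
      else if k = 6 then (v3 0 0 (1/2), v3 (1/2) (1/2) (1/2))
      else if k = 7 then (v3 0 0 0, v3 (1/2) (1/2) (1/2))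
      else (0, 0))"
| "eta_tilde_pt Infty = (0, 0)"

definition eta_tilde :: "bpt set \<Rightarrow> vec6" where
  "eta_tilde S = (\<Sum>i\<in>S. eta_tilde_pt i)"

definition vanishing_criterion :: "complex^3^3 \<Rightarrow> (bpt set \<Rightarrow> vec6) \<Rightarrow> bool" where
  "vanishing_criterion Z eta \<longleftrightarrow>
     (\<forall>S. S \<subseteq> Bset \<and> even (card S) \<longrightarrow>
        (theta (eta S) Z = 0 \<longleftrightarrow> card (symdiff S (U_eta eta)) \<noteq> 4))"

definition hyp_f :: "(nat \<Rightarrow> complex) \<Rightarrow> complex \<Rightarrow> complex" where
  "hyp_f a x = (\<Prod>i\<in>{1..7}. x - a i)"

text \<open>affine curve with the (finitely many) branch points removed\<close>
definition hyp_curve :: "(nat \<Rightarrow> complex) \<Rightarrow> (complex \<times> complex) set" where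
  "hyp_curve a = {(x, y). y^2 = hyp_f a x \<and> y \<noteq> 0}"

definition hyp_loops :: "(nat \<Rightarrow> complex) \<Rightarrow> (real \<Rightarrow> complex \<times> complex) set" where
  "hyp_loops a = {p. valid_path p \<and> pathfinish p = pathstart p \<and> path_image p \<subseteq> hyp_curve a}"

definition diff_integral :: "(complex \<Rightarrow> complex) \<Rightarrow> (real \<Rightarrow> complex \<times> complex) \<Rightarrow> complex" where
  "diff_integral P p = integral {0..1}
      (\<lambda>t. P (fst (p t)) / snd (p t) * vector_derivative (\<lambda>s. fst (p s)) (at t within {0..1}))"

text \<open>P j x dx / y (j = 1,2,3) is a basis of the holomorphic differentials, i.e. of
  {p(x) dx / y : deg p \<le> 2}\<close>
definition diff_basis :: "(3 \<Rightarrow> complex \<Rightarrow> complex) \<Rightarrow> bool" where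
  "diff_basis P \<longleftrightarrow> (\<forall>j. \<exists>c::nat \<Rightarrow> complex. \<forall>x. P j x = (\<Sum>k<3. c k * x ^ k)) \<and>
      (\<forall>l::complex^3. (\<forall>x. (\<Sum>j\<in>UNIV. l $ j * P j x) = 0) \<longrightarrow> l = 0)"

definition period_lattice :: "complex^3^3 \<Rightarrow> (complex^3) set" where
  "period_lattice Z = {cvec_of_int m + Z *v cvec_of_int n | m n. True}"

text \<open>(i/2) \<integral>_C omega_j \<and> conj(omega_k) = 2 \<integral>_C-plane P_j conj(P_k) / |f| dA  (two sheets)\<close>
definition hyp_gram :: "(nat \<Rightarrow> complex) \<Rightarrow> (3 \<Rightarrow> complex \<Rightarrow> complex) \<Rightarrow> complex^3^3" where
  "hyp_gram a P = (\<chi> j k. integral\<^sup>L lborel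
      (\<lambda>x::complex. 2 * P j x * cnj (P k x) / complex_of_real (cmod (hyp_f a x))))"

text \<open>Z is the period matrix (w.r.t. a symplectic basis A_i, B_i and the normalized differentials)
  of the hyperelliptic curve: the periods of the differentials over closed loops form exactly
  Z^3 + Z Z^3, and the Riemann bilinear relations (i/2)\<integral> omega_j \<and> conj omega_k = Im Z_jk hold,
  which forces the lattice basis (e_i, Z e_i) to be symplectic for the intersection form.\<close>
definition hyperelliptic_period_matrix :: "complex^3^3 \<Rightarrow> bool" where
  "hyperelliptic_period_matrix Z \<longleftrightarrow>
     (\<exists>a P. inj_on a {1..7} \<and> diff_basis P \<and>
        {(\<chi> j. diff_integral (P j) p) | p. p \<in> hyp_loops a} = period_lattice Z \<and>
        hyp_gram a P = (\<chi> j k. complex_of_real (Im (Z $ j $ k))))"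

text \<open>the abelian variety C^3 / (Z^3 + Z Z^3) is simple: it has no complex subtorus other than
  0 and itself\<close>
definition simple_jacobian :: "complex^3^3 \<Rightarrow> bool" where
  "simple_jacobian Z \<longleftrightarrow>
     \<not> (\<exists>W::(complex^3) set. subspace W \<and> (\<forall>v\<in>W. \<i> *s v \<in> W) \<and> W \<noteq> {0} \<and> W \<noteq> UNIV \<and>
           span (W \<inter> period_lattice Z) = W)"

end

(*
  Let \<gamma> \<in> \<Gamma>_{1,2} map the characteristic c = (1,1,1,1,0,1)/2, which is congruent to
  \<tilde>\<eta>_U for U = {2,4,6,\<infinity>}, to \<delta>, and put \<eta> = \<gamma>\<tilde>\<eta>. Elements of \<Gamma>_{1,2} preserve the
  parity e_* of half-integral characteristics, so U_\<eta> = U, and a check of Mumford's table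
  gives e_*(\<tilde>\<eta>_S) = (-1)^(#(S \<circ> U)/2) and \<tilde>\<eta>_S \<equiv> c exactly when S \<circ> U is empty or B.
  Theta constants with odd characteristic vanish, and vanishing depends only on the class
  modulo \<int>^6. So for #(S \<circ> U) = 2, 6 the characteristic \<eta>_S is odd; for S \<circ> U = {} or B it
  is congruent to \<gamma> c \<equiv> \<delta>; and for #(S \<circ> U) = 4 it is even and, \<gamma> being injective
  modulo \<int>^6, not congruent to \<delta>, so its theta constant is nonzero by the uniqueness of \<delta>.

  For the existence of \<gamma>: the transvection x \<mapsto> x + \<langle>x, v\<rangle> v with v integral and v_1 \<bullet> v_2 odd
  lies in \<Gamma>_{1,2}, and for bit vectors p, q with \<langle>p, q\<rangle> odd the one along p + q maps p/2 to
  q/2 modulo \<int>^6. Every nonzero even \<delta> is reached from c by two such steps, through one of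
  four explicit intermediate characteristics.
*)
theory Submission
  imports Defs
begin

lemma int_vec_add: "int_vec x \<Longrightarrow> int_vec y \<Longrightarrow> int_vec (x + y)"
  and int_vec_uminus: "int_vec x \<Longrightarrow> int_vec (- x)"
  and int_vec_of_int_scaleR: "int_vec x \<Longrightarrow> int_vec (of_int k *\<^sub>R x)"
  by (auto simp: int_vec_def)

lemma half_int_vec_iff_int_vec: "half_int_vec x \<longleftrightarrow> int_vec (2 *\<^sub>R x)"
  by (simp add: half_int_vec_def int_vec_def)

lemma cong6_iff_int_vec: "cong6 x y \<longleftrightarrow> int_vec (x - y)"
  by (cases x, cases y) (simp add: cong6_def)

lemma cong6_sym: "cong6 x y \<Longrightarrow> cong6 y x"
  unfolding cong6_iff_int_vec by (metis int_vec_uminus minus_diff_eq)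

lemma cong6_trans: "cong6 x y \<Longrightarrow> cong6 y z \<Longrightarrow> cong6 x z"
  unfolding cong6_iff_int_vec using int_vec_add[of "x - y" "y - z"] by simp

lemma inner_Ints: "(\<forall>i. a $ i \<in> \<int>) \<Longrightarrow> (\<forall>i. b $ i \<in> \<int>) \<Longrightarrow> (a::real^'n) \<bullet> b \<in> \<int>"
  by (auto simp: inner_vec_def intro!: Ints_sum Ints_mult)

lemma symp_Ints: "int_vec x \<Longrightarrow> int_vec y \<Longrightarrow> symp x y \<in> \<int>"
  by (auto simp: symp_def int_vec_def intro!: Ints_diff inner_Ints)

lemma estar_eq_if_Ints:
  assumes "2 * (fst y \<bullet> snd y - fst x \<bullet> snd x) \<in> \<int>"
  shows "estar y = estar x"
proof -
  obtain j :: int where "2 * (fst y \<bullet> snd y - fst x \<bullet> snd x) = of_int j"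
    using assms by (auto elim: Ints_cases)
  then have "fst y \<bullet> snd y = fst x \<bullet> snd x + of_int j / 2"
    by simp
  then have "4 * pi * \<i> * complex_of_real (fst y \<bullet> snd y)
      = 4 * pi * \<i> * complex_of_real (fst x \<bullet> snd x) + 2 * pi * \<i> * of_int j"
    by (simp add: algebra_simps)
  then show ?thesis
    by (simp add: estar_def exp_add exp_eq_1)
qed

lemma estar_add_int_vec:
  assumes "half_int_vec x" "int_vec m"
  shows "estar (x + m) = estar x"
proof (rule estar_eq_if_Ints)
  have "2 * (fst (x + m) \<bullet> snd (x + m) - fst x \<bullet> snd x)
      = (2 *\<^sub>R fst x) \<bullet> snd m + fst m \<bullet> (2 *\<^sub>R snd x) + 2 * (fst m \<bullet> snd m)"
    by (simp add: inner_add_left inner_add_right algebra_simps)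
  also have "\<dots> \<in> \<int>"
    using assms unfolding half_int_vec_def int_vec_def
    by (auto intro!: Ints_add Ints_mult inner_Ints simp del: inner_scaleR_left inner_scaleR_right)
  finally show "2 * (fst (x + m) \<bullet> snd (x + m) - fst x \<bullet> snd x) \<in> \<int>" .
qed

lemma estar_cong6: "half_int_vec x \<Longrightarrow> cong6 y x \<Longrightarrow> estar y = estar x"
  using estar_add_int_vec[of x "y - x"] by (simp add: cong6_iff_int_vec)

section \<open>Theta constants\<close>

lemma cdot_add_left: "cdot (a + b) c = cdot a c + cdot b c"
  and cdot_add_right: "cdot a (b + c) = cdot a b + cdot a c"
  and cdot_uminus_left: "cdot (- a) b = - cdot a b"
  and cdot_uminus_right: "cdot a (- b) = - cdot a b"
  by (simp_all add: cdot_def algebra_simps sum.distrib sum_negf)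

lemma cdot_cvec_of_real: "cdot (cvec_of_real a) (cvec_of_real b) = complex_of_real (a \<bullet> b)"
  by (simp add: cdot_def cvec_of_real_def inner_vec_def)

lemma cdot_cvec_of_int: "cdot (cvec_of_int a) (cvec_of_int b) = of_int (\<Sum>i\<in>UNIV. a $ i * b $ i)"
  by (simp add: cdot_def cvec_of_int_def)

lemma cdot_symmetric_matrix:
  assumes "transpose Z = Z"
  shows "cdot a (Z *v b) = cdot b (Z *v a)"
proof -
  have "Z $ i $ j = Z $ j $ i" for i j
    using arg_cong[OF assms, of "\<lambda>M. M $ j $ i"] by (simp add: transpose_def)
  then have "cdot a (Z *v b) = (\<Sum>j\<in>UNIV. \<Sum>i\<in>UNIV. b $ j * (Z $ j $ i * a $ i))"
    unfolding cdot_def matrix_vector_mult_def vec_lambda_beta sum_distrib_left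
    by (subst sum.swap) (simp add: ac_simps)
  then show ?thesis
    by (simp add: cdot_def matrix_vector_mult_def sum_distrib_left)
qed

lemma cvec_of_real_add: "cvec_of_real (a + b) = cvec_of_real a + cvec_of_real b"
  and cvec_of_real_uminus: "cvec_of_real (- a) = - cvec_of_real a"
  and cvec_of_int_add: "cvec_of_int (k + l) = cvec_of_int k + cvec_of_int l"
  and cvec_of_int_uminus: "cvec_of_int (- k) = - cvec_of_int k"
  by (simp_all add: cvec_of_real_def cvec_of_int_def vec_eq_iff)

lemma cvec_of_real_integral:
  assumes "\<forall>i. m $ i \<in> \<int>"
  obtains k where "cvec_of_real m = cvec_of_int k"
proof -
  have "complex_of_real (m $ i) = of_int \<lfloor>m $ i\<rfloor>" for i
    using assms by (metis Ints_cases floor_of_int of_real_of_int_eq)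
  then have "cvec_of_real m = cvec_of_int (\<chi> i. \<lfloor>m $ i\<rfloor>)"
    by (simp add: cvec_of_real_def cvec_of_int_def vec_eq_iff)
  then show ?thesis
    by (rule that)
qed

definition theta_term :: "vec6 \<Rightarrow> complex^3^3 \<Rightarrow> int^3 \<Rightarrow> complex" where
  "theta_term x Z n = (let u = cvec_of_int n + cvec_of_real (fst x) in
      exp (pi * \<i> * cdot u (Z *v u) + 2 * pi * \<i> * cdot u (cvec_of_real (snd x))))"

text \<open>Completing the square writes the theta series as a sum over the shifted lattice
  \<open>\<int>\<^sup>3 + \<xi>\<^sub>1\<close>; integral shifts of the characteristic then become reindexings.\<close>
lemma theta_eq_infsum_theta_term:
  assumes "transpose Z = Z"
  shows "theta x Z = infsum (theta_term x Z) UNIV"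
proof -
  define x1 where "x1 = cvec_of_real (fst x)"
  define x2 where "x2 = cvec_of_real (snd x)"
  have "exp (pi * \<i> * cdot x1 (Z *v x1) + 2 * pi * \<i> * cdot x1 x2) *
      exp (pi * \<i> * cdot (cvec_of_int n) (Z *v cvec_of_int n)
        + 2 * pi * \<i> * cdot (cvec_of_int n) (x2 + Z *v x1)) = theta_term x Z n" for n
  proof -
    let ?n = "cvec_of_int n"
    have "cdot x1 (Z *v ?n) = cdot ?n (Z *v x1)"
      by (rule cdot_symmetric_matrix[OF assms])
    then have "cdot (?n + x1) (Z *v (?n + x1))
        = cdot ?n (Z *v ?n) + 2 * cdot ?n (Z *v x1) + cdot x1 (Z *v x1)"
      by (simp add: matrix_vector_right_distrib cdot_add_left cdot_add_right)
    then show ?thesis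
      by (simp add: theta_term_def x1_def[symmetric] x2_def[symmetric] exp_add[symmetric]
          cdot_add_left cdot_add_right algebra_simps)
  qed
  then show ?thesis
    unfolding theta_def Let_def x1_def[symmetric] x2_def[symmetric] infsum_cmult_right'[symmetric]
    by presburger
qed

lemma theta_add_int_vec:
  assumes "transpose Z = Z" "int_vec m"
  shows "theta (x + m) Z = exp (2 * pi * \<i> * complex_of_real (fst x \<bullet> snd m)) * theta x Z"
proof -
  obtain k1 where k1: "cvec_of_real (fst m) = cvec_of_int k1"
    using assms(2) cvec_of_real_integral unfolding int_vec_def by blast
  obtain k2 where k2: "cvec_of_real (snd m) = cvec_of_int k2"
    using assms(2) cvec_of_real_integral unfolding int_vec_def by blast
  have "theta_term (x + m) Z
      = (\<lambda>n. exp (2 * pi * \<i> * complex_of_real (fst x \<bullet> snd m)) * theta_term x Z (n + k1))"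
  proof
    fix n
    let ?u = "cvec_of_int (n + k1) + cvec_of_real (fst x)"
    have u: "cvec_of_int n + cvec_of_real (fst (x + m)) = ?u"
      by (simp add: cvec_of_real_add cvec_of_int_add k1 algebra_simps)
    obtain j :: int where j: "cdot (cvec_of_int (n + k1)) (cvec_of_int k2) = of_int j"
      using cdot_cvec_of_int by blast
    have "cdot ?u (cvec_of_real (snd (x + m)))
        = cdot ?u (cvec_of_real (snd x)) + of_int j + complex_of_real (fst x \<bullet> snd m)"
      using j by (simp add: cvec_of_real_add cdot_add_left cdot_add_right cdot_cvec_of_real flip: k2)
    then show "theta_term (x + m) Z n
        = exp (2 * pi * \<i> * complex_of_real (fst x \<bullet> snd m)) * theta_term x Z (n + k1)"
      unfolding theta_term_def Let_def u
      by (simp add: distrib_left exp_add exp_eq_1 mult.assoc)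
  qed
  moreover have "bij_betw (\<lambda>n. n + k1) UNIV UNIV"
    by (rule bij_betwI[of _ _ _ "\<lambda>n. n - k1"]) auto
  ultimately show ?thesis
    using infsum_reindex_bij_betw[of "\<lambda>n. n + k1" UNIV UNIV "theta_term x Z"]
    by (simp add: theta_eq_infsum_theta_term[OF assms(1)] infsum_cmult_right')
qed

lemma theta_uminus:
  assumes "transpose Z = Z"
  shows "theta (- x) Z = theta x Z"
proof -
  have "theta_term (- x) Z (- n) = theta_term x Z n" for n
  proof -
    have u: "cvec_of_int (- n) + cvec_of_real (fst (- x)) = - (cvec_of_int n + cvec_of_real (fst x))"
      by (simp add: cvec_of_int_uminus cvec_of_real_uminus)
    have "Z *v (- u) = - (Z *v u)" for u :: "complex^3"
      by (metis diff_0 matrix_vector_mult_diff_distrib matrix_vector_mult_0_right)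
    then show ?thesis
      unfolding theta_term_def Let_def u
      by (simp only: cdot_uminus_left cdot_uminus_right snd_uminus cvec_of_real_uminus minus_minus)
  qed
  moreover have "bij_betw (\<lambda>n::int^3. - n) UNIV UNIV"
    by (rule bij_betwI[of _ _ _ "\<lambda>n. - n"]) auto
  ultimately show ?thesis
    using infsum_reindex_bij_betw[of "\<lambda>n::int^3. - n" UNIV UNIV "theta_term (- x) Z"]
    by (simp add: theta_eq_infsum_theta_term[OF assms])
qed

lemma theta_eq_0_cong6:
  assumes "transpose Z = Z" "cong6 x y"
  shows "theta x Z = 0 \<longleftrightarrow> theta y Z = 0"
  using theta_add_int_vec[OF assms(1), of "x - y" y] assms(2)
  by (simp add: cong6_iff_int_vec)

lemma theta_eq_0_if_odd:
  assumes "transpose Z = Z" "half_int_vec x" "estar x = -1"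
  shows "theta x Z = 0"
proof -
  have "int_vec ((- 2) *\<^sub>R x)"
    using assms(2) int_vec_uminus by (simp add: half_int_vec_iff_int_vec)
  have "theta x Z = theta (x + (- 2) *\<^sub>R x) Z"
    using theta_uminus[OF assms(1), of x] by (simp add: scaleR_2)
  also have "\<dots> = exp (2 * pi * \<i> * complex_of_real (fst x \<bullet> snd ((- 2) *\<^sub>R x))) * theta x Z"
    by (rule theta_add_int_vec[OF assms(1)]) fact
  also have "exp (2 * pi * \<i> * complex_of_real (fst x \<bullet> snd ((- 2) *\<^sub>R x))) = inverse (estar x)"
    by (simp add: estar_def exp_minus[symmetric] mult.assoc)
  finally show ?thesis
    using assms(3) by simp
qed

section \<open>The groups \<open>Sp\<^sub>6(\<int>)\<close> and \<open>\<Gamma>\<^sub>1\<^sub>,\<^sub>2\<close>\<close>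

lemma apply6_diff: "apply6 g (x - y) = apply6 g x - apply6 g y"
  and apply6_scaleR: "apply6 g (c *\<^sub>R x) = c *\<^sub>R apply6 g x"
  by (cases g; simp add: apply6_def matrix_vector_mult_diff_distrib matrix_vector_mult_scaleR
      algebra_simps)+

lemma int_vec_apply6: "int_vec x \<Longrightarrow> int_vec (apply6 g x)"
  by (cases g) (auto simp: int_vec_def apply6_def rmat_def matrix_vector_mult_def
      intro!: Ints_add Ints_sum Ints_mult)

lemma half_int_vec_apply6: "half_int_vec x \<Longrightarrow> half_int_vec (apply6 g x)"
  unfolding half_int_vec_iff_int_vec apply6_scaleR[symmetric] by (rule int_vec_apply6)

lemma cong6_apply6: "cong6 x y \<Longrightarrow> cong6 (apply6 g x) (apply6 g y)"
  unfolding cong6_iff_int_vec apply6_diff[symmetric] by (rule int_vec_apply6)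

lemma Sp6_symp: "g \<in> Sp6 \<Longrightarrow> symp (apply6 g x) (apply6 g y) = symp x y"
  unfolding Sp6_def by blast

lemma Gamma12_quadratic_Ints:
  "g \<in> Gamma12 \<Longrightarrow> int_vec x \<Longrightarrow>
    (fst (apply6 g x) \<bullet> snd (apply6 g x) - fst x \<bullet> snd x) / 2 \<in> \<int>"
  unfolding Gamma12_def by blast

text \<open>Pairing with the integral unit vectors recovers the coordinates of \<open>v\<close>
  from those of \<open>g v\<close>.\<close>
lemma int_vec_apply6_Sp6_iff:
  assumes "g \<in> Sp6"
  shows "int_vec (apply6 g v) \<longleftrightarrow> int_vec v"
proof
  assume gv: "int_vec (apply6 g v)"
  have "symp v w \<in> \<int>" if "int_vec w" for w
    using symp_Ints[OF gv int_vec_apply6[OF that]] Sp6_symp[OF assms] by metis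
  moreover have "int_vec (0, axis i 1)" "int_vec (axis i 1, 0)" for i
    by (auto simp: int_vec_def axis_def)
  ultimately have "symp v (0, axis i 1) \<in> \<int>" "symp v (axis i 1, 0) \<in> \<int>" for i
    by blast+
  then have "fst v $ i \<in> \<int>" "- (snd v $ i) \<in> \<int>" for i
    by (simp_all add: symp_def inner_axis)
  then show "int_vec v"
    by (metis Ints_minus minus_minus int_vec_def)
qed (rule int_vec_apply6)

lemma cong6_apply6_Sp6_iff: "g \<in> Sp6 \<Longrightarrow> cong6 (apply6 g x) (apply6 g y) \<longleftrightarrow> cong6 x y"
  by (simp add: cong6_iff_int_vec int_vec_apply6_Sp6_iff flip: apply6_diff)

lemma estar_apply6_Gamma12:
  assumes "g \<in> Gamma12" "half_int_vec x"
  shows "estar (apply6 g x) = estar x"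
proof (rule estar_eq_if_Ints)
  have "int_vec (2 *\<^sub>R x)"
    using assms(2) by (simp add: half_int_vec_iff_int_vec)
  from Gamma12_quadratic_Ints[OF assms(1) this]
  have "(fst (apply6 g (2 *\<^sub>R x)) \<bullet> snd (apply6 g (2 *\<^sub>R x)) - fst (2 *\<^sub>R x) \<bullet> snd (2 *\<^sub>R x)) / 2 \<in> \<int>" .
  also have "(fst (apply6 g (2 *\<^sub>R x)) \<bullet> snd (apply6 g (2 *\<^sub>R x)) - fst (2 *\<^sub>R x) \<bullet> snd (2 *\<^sub>R x)) / 2
      = 2 * (fst (apply6 g x) \<bullet> snd (apply6 g x) - fst x \<bullet> snd x)"
    by (simp add: apply6_scaleR)
  finally show "2 * (fst (apply6 g x) \<bullet> snd (apply6 g x) - fst x \<bullet> snd x) \<in> \<int>" .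
qed

definition mult6 :: "mat6 \<Rightarrow> mat6 \<Rightarrow> mat6" where
  "mult6 g h = (case g of (A, B, C, D) \<Rightarrow> case h of (A', B', C', D') \<Rightarrow>
     (A ** A' + B ** C', A ** B' + B ** D', C ** A' + D ** C', C ** B' + D ** D'))"

lemma rmat_add: "rmat (A + B) = rmat A + rmat B"
  and rmat_mult: "rmat (A ** B) = rmat A ** rmat B"
  by (simp_all add: rmat_def vec_eq_iff matrix_matrix_mult_def)

lemma apply6_mult6: "apply6 (mult6 g h) x = apply6 g (apply6 h x)"
  by (cases g, cases h) (simp add: mult6_def apply6_def rmat_add rmat_mult
      matrix_vector_mult_add_rdistrib matrix_vector_right_distrib matrix_vector_mul_assoc add_ac)

lemma mult6_Gamma12:
  assumes "g \<in> Gamma12" "h \<in> Gamma12"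
  shows "mult6 g h \<in> Gamma12"
proof -
  have "g \<in> Sp6" "h \<in> Sp6"
    using assms unfolding Gamma12_def by blast+
  then have "symp (apply6 (mult6 g h) x) (apply6 (mult6 g h) y) = symp x y" for x y
    by (simp add: apply6_mult6 Sp6_symp)
  then have "mult6 g h \<in> Sp6"
    unfolding Sp6_def by blast
  moreover have "(fst (apply6 (mult6 g h) x) \<bullet> snd (apply6 (mult6 g h) x) - fst x \<bullet> snd x) / 2 \<in> \<int>"
    if "int_vec x" for x
  proof -
    let ?Q = "\<lambda>y. fst y \<bullet> snd y"
    have "(?Q (apply6 g (apply6 h x)) - ?Q (apply6 h x)) / 2 + (?Q (apply6 h x) - ?Q x) / 2 \<in> \<int>"
      using that by (intro Ints_add Gamma12_quadratic_Ints assms int_vec_apply6)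
    then show ?thesis
      by (simp add: apply6_mult6 diff_divide_distrib)
  qed
  ultimately show ?thesis
    unfolding Gamma12_def by blast
qed

section \<open>Characteristics as bit vectors\<close>

definition ivec :: "int^3 \<Rightarrow> real^3" where
  "ivec v = (\<chi> i. of_int (v $ i))"

definition ivec6 :: "(int^3) \<times> (int^3) \<Rightarrow> vec6" where
  "ivec6 p = (ivec (fst p), ivec (snd p))"

definition half_char :: "(int^3) \<times> (int^3) \<Rightarrow> vec6" where
  "half_char p = (1/2) *\<^sub>R ivec6 p"

definition int_inner :: "int^3 \<Rightarrow> int^3 \<Rightarrow> int" where
  "int_inner u v = (\<Sum>i\<in>UNIV. u $ i * v $ i)"

definition int_quad :: "(int^3) \<times> (int^3) \<Rightarrow> int" where
  "int_quad p = int_inner (fst p) (snd p)"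

definition int_symp :: "(int^3) \<times> (int^3) \<Rightarrow> (int^3) \<times> (int^3) \<Rightarrow> int" where
  "int_symp p q = int_inner (fst p) (snd q) - int_inner (snd p) (fst q)"

lemma inner_ivec: "ivec u \<bullet> ivec v = of_int (int_inner u v)"
  by (simp add: inner_vec_def ivec_def int_inner_def)

lemma ivec6_add: "ivec6 (p + q) = ivec6 p + ivec6 q"
  by (simp add: ivec6_def ivec_def vec_eq_iff)

lemma symp_ivec6: "symp (ivec6 p) (ivec6 q) = of_int (int_symp p q)"
  by (simp add: symp_def ivec6_def inner_ivec int_symp_def)

lemma int_vec_ivec6: "int_vec (ivec6 p)"
  by (simp add: int_vec_def ivec6_def ivec_def)

lemma int_quad_add:
  "int_quad (p + q) = int_quad p + int_quad q + int_symp p q + 2 * int_inner (snd p) (fst q)"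
  by (simp add: int_quad_def int_symp_def int_inner_def sum.distrib algebra_simps sum_distrib_left)

lemma exp_pi_int: "exp (pi * \<i> * of_int k) = (if even k then 1 else -1)"
proof (cases "even k")
  case True
  then obtain j where "k = 2 * j"
    by blast
  then show ?thesis
    using True by (simp add: exp_eq_1)
next
  case False
  then obtain j where j: "k = 2 * j + 1"
    using oddE by blast
  have "exp (pi * \<i> * of_int k) = exp (2 * pi * \<i> * of_int j) * exp (pi * \<i>)"
    by (simp add: j exp_add[symmetric] algebra_simps)
  also have "\<dots> = -1"
    by (simp add: exp_eq_1)
  finally show ?thesis
    using False by simp
qed

lemma estar_half_char: "estar (half_char p) = (if even (int_quad p) then 1 else -1)"
proof -
  have "estar (half_char p) = exp (pi * \<i> * of_int (int_quad p))"
    by (simp add: estar_def half_char_def ivec6_def inner_ivec int_quad_def mult.assoc)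
  then show ?thesis
    by (simp add: exp_pi_int)
qed

lemma half_of_int_Ints_iff: "(of_int k / 2 :: real) \<in> \<int> \<longleftrightarrow> even k"
proof
  assume "(of_int k / 2 :: real) \<in> \<int>"
  then obtain j where "(of_int k / 2 :: real) = of_int j"
    by (auto elim: Ints_cases)
  then have "k = 2 * j"
    by linarith
  then show "even k"
    by simp
qed (auto elim: evenE)

lemma half_char_nth [simp]:
  "fst (half_char p) $ i = of_int (fst p $ i) / 2" "snd (half_char p) $ i = of_int (snd p $ i) / 2"
  by (simp_all add: half_char_def ivec6_def ivec_def)

lemma half_int_vec_half_char: "half_int_vec (half_char p)"
  by (simp add: half_int_vec_def)

lemma int_vec_half_char_iff:
  "int_vec (half_char p) \<longleftrightarrow> (\<forall>i. even (fst p $ i)) \<and> (\<forall>i. even (snd p $ i))"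
  by (simp add: int_vec_def half_of_int_Ints_iff)

lemma cong6_half_char_iff:
  "cong6 (half_char p) (half_char q) \<longleftrightarrow>
    (\<forall>i. even (fst p $ i - fst q $ i)) \<and> (\<forall>i. even (snd p $ i - snd q $ i))"
proof -
  have "half_char p - half_char q = half_char (p - q)"
    by (simp add: half_char_def ivec6_def ivec_def vec_eq_iff algebra_simps)
  then show ?thesis
    by (simp only: cong6_iff_int_vec int_vec_half_char_iff fst_diff snd_diff vector_minus_component)
qed

lemma half_int_minus_parity_Ints:
  fixes r :: real
  assumes "2 * r \<in> \<int>"
  shows "r - of_int (\<lfloor>2 * r\<rfloor> mod 2) / 2 \<in> \<int>"
proof -
  obtain k :: int where k: "2 * r = of_int k"
    using assms by (auto elim: Ints_cases)
  have "real_of_int k = 2 * of_int (k div 2) + of_int (k mod 2)"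
    by (metis div_mult_mod_eq mult.commute of_int_add of_int_mult of_int_numeral)
  then have "r - of_int (k mod 2) / 2 = of_int (k div 2)"
    using k by linarith
  moreover have "\<lfloor>2 * r\<rfloor> = k"
    using k by simp
  ultimately show ?thesis
    by simp
qed

lemma half_int_vec_cong6_half_char:
  assumes "half_int_vec x"
  obtains p where "\<forall>i. fst p $ i \<in> {0, 1}" "\<forall>i. snd p $ i \<in> {0, 1}" "cong6 x (half_char p)"
proof -
  define p where "p = ((\<chi> i. \<lfloor>2 * fst x $ i\<rfloor> mod 2), (\<chi> i. \<lfloor>2 * snd x $ i\<rfloor> mod 2))"
  have "fst (x - half_char p) $ i \<in> \<int> \<and> snd (x - half_char p) $ i \<in> \<int>" for i
  proof -
    have "2 * fst x $ i \<in> \<int>" "2 * snd x $ i \<in> \<int>"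
      using assms by (auto simp: half_int_vec_def)
    from this[THEN half_int_minus_parity_Ints] show ?thesis
      by (simp only: p_def fst_diff snd_diff vector_minus_component half_char_nth vec_lambda_beta
          fst_conv snd_conv)
  qed
  then have "cong6 x (half_char p)"
    unfolding cong6_iff_int_vec int_vec_def by blast
  moreover have "\<forall>i. fst p $ i \<in> {0, 1}" "\<forall>i. snd p $ i \<in> {0, 1}"
    by (auto simp: p_def)
  ultimately show ?thesis
    using that by blast
qed

section \<open>Transvections\<close>

lemma symp_add_left: "symp (x + y) z = symp x z + symp y z"
  and symp_add_right: "symp x (y + z) = symp x y + symp x z"
  and symp_scaleR_left: "symp (c *\<^sub>R x) z = c * symp x z"
  and symp_scaleR_right: "symp x (c *\<^sub>R z) = c * symp x z"
  and symp_commute: "symp y x = - symp x y"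
  by (simp_all add: symp_def inner_add_left inner_add_right inner_commute algebra_simps)

lemma symp_self: "symp x x = 0"
  using symp_commute[of x x] by simp

definition outer :: "int^3 \<Rightarrow> int^3 \<Rightarrow> int^3^3" where
  "outer a b = (\<chi> i j. a $ i * b $ j)"

definition transv :: "(int^3) \<times> (int^3) \<Rightarrow> mat6" where
  "transv v = (mat 1 + outer (fst v) (snd v), - outer (fst v) (fst v),
               outer (snd v) (snd v), mat 1 - outer (snd v) (fst v))"

lemma apply6_transv: "apply6 (transv v) x = x + symp x (ivec6 v) *\<^sub>R ivec6 v"
  by (simp add: apply6_def transv_def prod_eq_iff vec_eq_iff forall_3 matrix_vector_mult_def
      sum_3 rmat_def outer_def mat_def symp_def inner_vec_def ivec6_def ivec_def algebra_simps)

lemma transv_Sp6: "transv v \<in> Sp6"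
proof -
  have "symp (x + symp x V *\<^sub>R V) (y + symp y V *\<^sub>R V) = symp x y" for x y V
    by (simp add: symp_add_left symp_add_right symp_scaleR_left symp_scaleR_right symp_self
        symp_commute[of V] algebra_simps)
  then show ?thesis
    by (simp add: Sp6_def apply6_transv)
qed

lemma transv_Gamma12:
  assumes "odd (int_quad v)"
  shows "transv v \<in> Gamma12"
proof -
  have "(fst (apply6 (transv v) x) \<bullet> snd (apply6 (transv v) x) - fst x \<bullet> snd x) / 2 \<in> \<int>"
    if "int_vec x" for x
  proof -
    define V1 where "V1 = ivec (fst v)"
    define V2 where "V2 = ivec (snd v)"
    define t where "t = symp x (V1, V2)"
    have v: "ivec6 v = (V1, V2)"
      by (simp add: ivec6_def V1_def V2_def)
    have "fst x \<bullet> V2 = t + snd x \<bullet> V1"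
      by (simp add: t_def symp_def)
    moreover have "V1 \<bullet> V2 = of_int (int_quad v)"
      by (simp add: V1_def V2_def inner_ivec int_quad_def)
    ultimately have "(fst (apply6 (transv v) x) \<bullet> snd (apply6 (transv v) x) - fst x \<bullet> snd x) / 2
        = t * t * (of_int (1 + int_quad v) / 2) + t * (snd x \<bullet> V1)"
      by (simp add: apply6_transv v t_def[symmetric] inner_add_left inner_add_right
          inner_commute[of V1] field_simps)
    also have "\<dots> \<in> \<int>"
    proof -
      have "int_vec (V1, V2)"
        using int_vec_ivec6[of v] by (simp add: v)
      then have "t \<in> \<int>" "snd x \<bullet> V1 \<in> \<int>"
        using that unfolding t_def by (auto simp: int_vec_def intro: symp_Ints inner_Ints)
      moreover have "of_int (1 + int_quad v) / 2 \<in> (\<int> :: real set)"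
        using assms by (simp only: half_of_int_Ints_iff) simp
      ultimately show ?thesis
        by (intro Ints_add Ints_mult)
    qed
    finally show ?thesis .
  qed
  with transv_Sp6 show ?thesis
    unfolding Gamma12_def by blast
qed

text \<open>The transvection along \<open>p + q\<close> carries \<open>p/2\<close> to \<open>q/2\<close> modulo \<open>\<int>\<^sup>6\<close>
  because \<open>\<langle>p/2, p + q\<rangle> = \<langle>p, q\<rangle>/2\<close> is a half-odd integer.\<close>
lemma transv_half_char:
  assumes "odd (int_symp p q)"
  shows "cong6 (apply6 (transv (p + q)) (half_char p)) (half_char q)"
proof -
  obtain k where k: "int_symp p q = 2 * k + 1"
    using assms oddE by blast
  define P where "P = ivec6 p"
  define Q where "Q = ivec6 q"
  have "symp P Q = of_int (int_symp p q)"
    by (simp add: P_def Q_def symp_ivec6)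
  then have "symp (half_char p) (ivec6 (p + q)) = of_int k + 1/2"
    by (simp add: half_char_def ivec6_add symp_scaleR_left symp_add_right symp_self k
        flip: P_def Q_def)
  moreover have "(1/2::real) *\<^sub>R P + (1/2) *\<^sub>R P = P"
    by (simp flip: scaleR_add_left)
  ultimately have "apply6 (transv (p + q)) (half_char p) - half_char q
      = of_int (k + 1) *\<^sub>R P + of_int k *\<^sub>R Q"
    by (simp add: apply6_transv half_char_def ivec6_add algebra_simps flip: P_def Q_def)
  moreover have "int_vec (of_int (k + 1) *\<^sub>R P + of_int k *\<^sub>R Q)"
    unfolding P_def Q_def by (intro int_vec_add int_vec_of_int_scaleR int_vec_ivec6)
  ultimately show ?thesis
    by (simp add: cong6_iff_int_vec)
qed

lemma Gamma12_moves_half_char: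
  assumes "even (int_quad p)" "even (int_quad q)" "odd (int_symp p q)"
  shows "\<exists>g\<in>Gamma12. cong6 (apply6 g (half_char p)) (half_char q)"
proof -
  have "odd (int_quad (p + q))"
    using assms by (simp add: int_quad_add)
  then show ?thesis
    using transv_Gamma12 transv_half_char[OF assms(3)] by blast
qed

text \<open>The characteristic \<open>half_char eta_tilde_U_bits\<close> is congruent to \<open>\<tilde>\<eta>\<^sub>U\<close> for
  \<open>U = U\<^sub>\<tilde>\<eta> = {2, 4, 6, \<infinity>}\<close> (the case \<open>S = U\<close> of \<open>cong6_eta_tilde_iff\<close>).\<close>
definition eta_tilde_U_bits :: "(int^3) \<times> (int^3)" where
  "eta_tilde_U_bits = (vector [1, 1, 1], vector [1, 0, 1])"

lemma half_char_eta_tilde_U_bits: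
  "half_char eta_tilde_U_bits = (v3 (1/2) (1/2) (1/2), v3 (1/2) 0 (1/2))"
  by (simp add: eta_tilde_U_bits_def prod_eq_iff vec_eq_iff forall_3 v3_def)

lemma even_bits_linked_to_eta_tilde_U_bits:
  fixes a1 a2 a3 b1 b2 b3 :: int
  defines "d \<equiv> (vector [a1, a2, a3], vector [b1, b2, b3])"
  assumes "a1 \<in> {0, 1}" "a2 \<in> {0, 1}" "a3 \<in> {0, 1}" "b1 \<in> {0, 1}" "b2 \<in> {0, 1}" "b3 \<in> {0, 1}"
    and "even (int_quad d)" "d \<noteq> 0"
  shows "\<exists>c. even (int_quad c) \<and> odd (int_symp eta_tilde_U_bits c) \<and> odd (int_symp c d)"
proof -
  define C :: "((int^3) \<times> (int^3)) set" where
    "C = {(vector [0, 0, 0], vector [0, 0, 1]), (vector [0, 0, 1], vector [0, 0, 0]),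
          (vector [0, 1, 1], vector [0, 1, 1]), (vector [1, 0, 1], vector [1, 1, 1])}"
  have "\<forall>c\<in>C. even (int_quad c) \<and> odd (int_symp eta_tilde_U_bits c)"
    by (simp add: C_def eta_tilde_U_bits_def int_quad_def int_symp_def int_inner_def sum_3)
  moreover have "\<exists>c\<in>C. odd (int_symp c d)"
    using assms(2-)
    by (simp add: d_def C_def int_quad_def int_symp_def int_inner_def sum_3 zero_prod_def
        vec_eq_iff forall_3) (elim disjE; simp)
  ultimately show ?thesis
    by blast
qed

lemma exists_Gamma12_eta_tilde_U_to_even_char:
  assumes "half_int_vec \<delta>" "even_char \<delta>" "\<not> cong6 \<delta> (0, 0)"
  shows "\<exists>g\<in>Gamma12. cong6 (apply6 g (half_char eta_tilde_U_bits)) \<delta>"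
proof -
  obtain d where bits: "\<forall>i. fst d $ i \<in> {0, 1}" "\<forall>i. snd d $ i \<in> {0, 1}"
    and \<delta>d: "cong6 \<delta> (half_char d)"
    using half_int_vec_cong6_half_char[OF assms(1)] by blast
  have "half_char 0 = (0, 0)"
    by (simp add: half_char_def ivec6_def ivec_def zero_prod_def vec_eq_iff)
  then have "d \<noteq> 0"
    using \<delta>d assms(3) by auto
  moreover have "even (int_quad d)"
    using estar_cong6[OF assms(1) cong6_sym[OF \<delta>d]] assms(2)
    by (simp add: even_char_def estar_half_char split: if_splits)
  moreover have "d = (vector [fst d $ 1, fst d $ 2, fst d $ 3], vector [snd d $ 1, snd d $ 2, snd d $ 3])"
    by (simp add: prod_eq_iff vec_eq_iff forall_3)
  ultimately obtain c where c: "even (int_quad c)" "odd (int_symp eta_tilde_U_bits c)" "odd (int_symp c d)"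
    using even_bits_linked_to_eta_tilde_U_bits[of "fst d $ 1" "fst d $ 2" "fst d $ 3"
        "snd d $ 1" "snd d $ 2" "snd d $ 3"] bits
    by metis
  have "even (int_quad eta_tilde_U_bits)"
    by (simp add: eta_tilde_U_bits_def int_quad_def int_inner_def sum_3)
  then obtain g1 where g1: "g1 \<in> Gamma12" "cong6 (apply6 g1 (half_char eta_tilde_U_bits)) (half_char c)"
    using Gamma12_moves_half_char c(1,2) by blast
  obtain g2 where g2: "g2 \<in> Gamma12" "cong6 (apply6 g2 (half_char c)) (half_char d)"
    using Gamma12_moves_half_char c(1,3) \<open>even (int_quad d)\<close> by blast
  have "cong6 (apply6 (mult6 g2 g1) (half_char eta_tilde_U_bits)) \<delta>"
    unfolding apply6_mult6
    by (rule cong6_trans[OF cong6_trans[OF cong6_apply6[OF g1(2)] g2(2)] cong6_sym[OF \<delta>d]])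
  with mult6_Gamma12[OF g2(1) g1(1)] show ?thesis
    by blast
qed

section \<open>Mumford's map\<close>

lemma Bset_eq: "Bset = {Infty, Pt 1, Pt 2, Pt 3, Pt 4, Pt 5, Pt 6, Pt 7}"
proof -
  have "{1..7::nat} = {1, 2, 3, 4, 5, 6, 7}"
    by auto
  then show ?thesis
    by (simp add: Bset_def)
qed

lemma card_subset_Bset:
  assumes "S \<subseteq> Bset"
  shows "card S = of_bool (Infty \<in> S) + of_bool (Pt 1 \<in> S) + of_bool (Pt 2 \<in> S)
    + of_bool (Pt 3 \<in> S) + of_bool (Pt 4 \<in> S) + of_bool (Pt 5 \<in> S) + of_bool (Pt 6 \<in> S)
    + of_bool (Pt 7 \<in> S)"
proof -
  have "card S = card (Bset \<inter> {x. x \<in> S})"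
    using assms by (simp add: Int_absorb1)
  also have "\<dots> = (\<Sum>x\<in>Bset. of_bool (x \<in> S))"
    by (simp add: Bset_def)
  finally show ?thesis
    by (simp add: Bset_eq del: sum_of_bool_eq)
qed

lemma card_symdiff_eta_tilde_U:
  assumes "S \<subseteq> Bset"
  shows "card (symdiff S {Infty, Pt 2, Pt 4, Pt 6}) = of_bool (Infty \<notin> S) + of_bool (Pt 1 \<in> S)
    + of_bool (Pt 2 \<notin> S) + of_bool (Pt 3 \<in> S) + of_bool (Pt 4 \<notin> S) + of_bool (Pt 5 \<in> S)
    + of_bool (Pt 6 \<notin> S) + of_bool (Pt 7 \<in> S)"
proof -
  have "symdiff S {Infty, Pt 2, Pt 4, Pt 6} \<subseteq> Bset"
    using assms by (auto simp: symdiff_def Bset_eq)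
  from card_subset_Bset[OF this] show ?thesis
    by (simp add: symdiff_def)
qed

lemma card_symdiff_eta_tilde_U_cases:
  assumes "S \<subseteq> Bset" "even (card S)"
  shows "card (symdiff S {Infty, Pt 2, Pt 4, Pt 6}) \<in> {0, 2, 4, 6, 8}"
  using assms(2) unfolding card_symdiff_eta_tilde_U[OF assms(1)] card_subset_Bset[OF assms(1)]
  by (cases "Infty \<in> S"; cases "Pt 1 \<in> S"; cases "Pt 2 \<in> S"; cases "Pt 3 \<in> S";
      cases "Pt 4 \<in> S"; cases "Pt 5 \<in> S"; cases "Pt 6 \<in> S"; cases "Pt 7 \<in> S"; simp)

definition eta_tilde_bits :: "bpt set \<Rightarrow> (int^3) \<times> (int^3)" where
  "eta_tilde_bits S = (let t = \<lambda>k. of_bool (Pt k \<in> S) in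
     (vector [t 1 + t 2, t 3 + t 4, t 5 + t 6],
      vector [t 2 + t 3 + t 4 + t 5 + t 6 + t 7, t 4 + t 5 + t 6 + t 7, t 6 + t 7]))"

lemma eta_tilde_eq_half_char:
  assumes "S \<subseteq> Bset"
  shows "eta_tilde S = half_char (eta_tilde_bits S)"
proof -
  have "eta_tilde S = (\<Sum>x\<in>Bset. if x \<in> S then eta_tilde_pt x else 0)"
    using assms unfolding eta_tilde_def
    by (subst sum.inter_restrict[symmetric]) (auto simp: Bset_def Int_absorb1)
  then show ?thesis
    by (simp add: Bset_eq prod_eq_iff vec_eq_iff forall_3 fst_sum snd_sum v3_def
        eta_tilde_bits_def add_divide_distrib)
qed

lemma estar_eta_tilde:
  assumes "S \<subseteq> Bset" "even (card S)"
  shows "estar (eta_tilde S) = (-1) ^ (card (symdiff S {Infty, Pt 2, Pt 4, Pt 6}) div 2)"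
  using assms(2)
  unfolding card_symdiff_eta_tilde_U[OF assms(1)] card_subset_Bset[OF assms(1)]
    eta_tilde_eq_half_char[OF assms(1)] estar_half_char
  by (cases "Infty \<in> S"; cases "Pt 1 \<in> S"; cases "Pt 2 \<in> S"; cases "Pt 3 \<in> S";
      cases "Pt 4 \<in> S"; cases "Pt 5 \<in> S"; cases "Pt 6 \<in> S"; cases "Pt 7 \<in> S";
      simp add: eta_tilde_bits_def int_quad_def int_inner_def sum_3)

lemma cong6_eta_tilde_iff:
  assumes "S \<subseteq> Bset" "even (card S)"
  shows "cong6 (eta_tilde S) (half_char eta_tilde_U_bits)
    \<longleftrightarrow> card (symdiff S {Infty, Pt 2, Pt 4, Pt 6}) \<in> {0, 8}"
  using assms(2)
  unfolding card_symdiff_eta_tilde_U[OF assms(1)] card_subset_Bset[OF assms(1)]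
    eta_tilde_eq_half_char[OF assms(1)] cong6_half_char_iff
  by (cases "Infty \<in> S"; cases "Pt 1 \<in> S"; cases "Pt 2 \<in> S"; cases "Pt 3 \<in> S";
      cases "Pt 4 \<in> S"; cases "Pt 5 \<in> S"; cases "Pt 6 \<in> S"; cases "Pt 7 \<in> S";
      simp add: eta_tilde_bits_def eta_tilde_U_bits_def forall_3)

lemma half_int_vec_eta_tilde_pt: "half_int_vec (eta_tilde_pt x)"
  by (cases x) (auto simp: half_int_vec_def forall_3 v3_def)

lemma U_eta_act:
  assumes "g \<in> Gamma12" "\<And>x. half_int_vec (eta {x})"
  shows "U_eta (act g eta) = U_eta eta"
  using estar_apply6_Gamma12[OF assms(1) assms(2)] by (simp add: U_eta_def act_def)

lemma U_eta_eta_tilde: "U_eta eta_tilde = {Infty, Pt 2, Pt 4, Pt 6}"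
proof -
  have "estar (eta_tilde {Pt i}) = -1 \<longleftrightarrow> i \<in> {2, 4, 6}" if "i \<in> {1..7}" for i
  proof -
    from that have "i = 1 \<or> i = 2 \<or> i = 3 \<or> i = 4 \<or> i = 5 \<or> i = 6 \<or> i = 7"
      by auto
    moreover have "{Pt i} \<subseteq> Bset"
      using that by (simp add: Bset_def)
    ultimately show ?thesis
      by (auto simp: eta_tilde_eq_half_char estar_half_char eta_tilde_bits_def int_quad_def
          int_inner_def sum_3)
  qed
  then show ?thesis
    by (auto simp: U_eta_def)
qed

lemma U_eta_act_eta_tilde: "g \<in> Gamma12 \<Longrightarrow> U_eta (act g eta_tilde) = {Infty, Pt 2, Pt 4, Pt 6}"
  using U_eta_act[of g eta_tilde] U_eta_eta_tilde
  by (simp add: eta_tilde_def half_int_vec_eta_tilde_pt)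

lemma half_int_vec_act_eta_tilde: "S \<subseteq> Bset \<Longrightarrow> half_int_vec (act g eta_tilde S)"
  by (simp add: act_def eta_tilde_eq_half_char half_int_vec_half_char half_int_vec_apply6)

lemma estar_act_eta_tilde:
  assumes "g \<in> Gamma12" "S \<subseteq> Bset" "even (card S)"
  shows "estar (act g eta_tilde S) = (-1) ^ (card (symdiff S {Infty, Pt 2, Pt 4, Pt 6}) div 2)"
  using estar_apply6_Gamma12[OF assms(1) half_int_vec_half_char] estar_eta_tilde[OF assms(2,3)]
  by (simp add: act_def eta_tilde_eq_half_char[OF assms(2)])

lemma cong6_act_eta_tilde_iff:
  assumes "g \<in> Sp6" "S \<subseteq> Bset" "even (card S)"
  shows "cong6 (act g eta_tilde S) (apply6 g (half_char eta_tilde_U_bits))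
    \<longleftrightarrow> card (symdiff S {Infty, Pt 2, Pt 4, Pt 6}) \<in> {0, 8}"
  unfolding act_def cong6_apply6_Sp6_iff[OF assms(1)] by (rule cong6_eta_tilde_iff[OF assms(2,3)])

lemma vanishing_criterion_act_eta_tilde:
  assumes Z: "transpose Z = Z" and g: "g \<in> Gamma12" and "theta \<delta> Z = 0"
    and unique: "\<forall>\<xi>. half_int_vec \<xi> \<and> even_char \<xi> \<and> theta \<xi> Z = 0 \<longrightarrow> cong6 \<xi> \<delta>"
    and g_\<delta>: "cong6 (apply6 g (half_char eta_tilde_U_bits)) \<delta>"
  shows "vanishing_criterion Z (act g eta_tilde)"
  unfolding vanishing_criterion_def
proof (intro allI impI)
  fix S
  assume "S \<subseteq> Bset \<and> even (card S)"
  then have S: "S \<subseteq> Bset" and even_S: "even (card S)"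
    by auto
  define k where "k = card (symdiff S {Infty, Pt 2, Pt 4, Pt 6})"
  define x where "x = act g eta_tilde S"
  have half_int_x: "half_int_vec x"
    using half_int_vec_act_eta_tilde[OF S] by (simp add: x_def)
  have estar_x: "estar x = (-1) ^ (k div 2)"
    using estar_act_eta_tilde[OF g S even_S] by (simp add: x_def k_def)
  have "g \<in> Sp6"
    using g unfolding Gamma12_def by blast
  have "cong6 x \<delta> \<longleftrightarrow> cong6 x (apply6 g (half_char eta_tilde_U_bits))"
    using cong6_trans[OF _ g_\<delta>] cong6_trans[OF _ cong6_sym[OF g_\<delta>]] by blast
  also have "\<dots> \<longleftrightarrow> k \<in> {0, 8}"
    unfolding x_def k_def by (rule cong6_act_eta_tilde_iff[OF \<open>g \<in> Sp6\<close> S even_S])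
  finally have cong_x: "cong6 x \<delta> \<longleftrightarrow> k \<in> {0, 8}" .
  have "k \<in> {0, 2, 4, 6, 8}"
    unfolding k_def by (rule card_symdiff_eta_tilde_U_cases[OF S even_S])
  then consider "k = 4" | "k = 2 \<or> k = 6" | "k = 0 \<or> k = 8"
    by blast
  then have "theta x Z = 0 \<longleftrightarrow> k \<noteq> 4"
  proof cases
    case 1
    then have "even_char x" "\<not> cong6 x \<delta>"
      using estar_x cong_x by (simp_all add: even_char_def)
    then have "theta x Z \<noteq> 0"
      using unique half_int_x by blast
    then show ?thesis
      using 1 by simp
  next
    case 2
    then have "estar x = -1"
      using estar_x by auto
    then show ?thesis
      using theta_eq_0_if_odd[OF Z half_int_x] 2 by auto
  next
    case 3
    then have "cong6 x \<delta>"
      using cong_x by simp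
    then show ?thesis
      using theta_eq_0_cong6[OF Z] \<open>theta \<delta> Z = 0\<close> 3 by auto
  qed
  then show "theta (act g eta_tilde S) Z = 0 \<longleftrightarrow> card (symdiff S (U_eta (act g eta_tilde))) \<noteq> 4"
    by (simp add: x_def k_def U_eta_act_eta_tilde[OF g])
qed

theorem proposition5p6:
  fixes Z :: "complex^3^3" and \<delta> :: vec6
  assumes "siegel3 Z"
    and "hyperelliptic_period_matrix Z"
    and "simple_jacobian Z"
    and "half_int_vec \<delta>" and "even_char \<delta>" and "theta \<delta> Z = 0"
    and "\<forall>\<xi>. half_int_vec \<xi> \<and> even_char \<xi> \<and> theta \<xi> Z = 0 \<longrightarrow> cong6 \<xi> \<delta>"
    and "\<not> cong6 \<delta> (0, 0)"
  shows "(\<exists>\<gamma>\<in>Gamma12. vanishing_criterion Z (act \<gamma> eta_tilde)) \<and>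
         (\<forall>\<gamma>\<in>Gamma12. cong6 (apply6 \<gamma> (v3 (1/2) (1/2) (1/2), v3 (1/2) 0 (1/2))) \<delta> \<longrightarrow>
              vanishing_criterion Z (act \<gamma> eta_tilde))"
proof -
  have Z: "transpose Z = Z"
    using assms(1) by (simp add: siegel3_def)
  have criterion: "\<forall>\<gamma>\<in>Gamma12. cong6 (apply6 \<gamma> (v3 (1/2) (1/2) (1/2), v3 (1/2) 0 (1/2))) \<delta> \<longrightarrow>
      vanishing_criterion Z (act \<gamma> eta_tilde)"
    unfolding half_char_eta_tilde_U_bits[symmetric]
    using vanishing_criterion_act_eta_tilde[OF Z _ assms(6,7)] by blast
  obtain \<gamma> where "\<gamma> \<in> Gamma12" "cong6 (apply6 \<gamma> (v3 (1/2) (1/2) (1/2), v3 (1/2) 0 (1/2))) \<delta>"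
    using exists_Gamma12_eta_tilde_U_to_even_char[OF assms(4,5,8)]
    unfolding half_char_eta_tilde_U_bits ..
  with criterion show ?thesis
    by blast
qed

end
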